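(* Let $M=3$, $d=1$, $R>0$ and $\gamma>0$, and consider the true centers $\mu_1^*=-R$, $\mu_2^*=R$, $\mu_3^*=\gamma R$. Let $$\mathcal{D}=\{(\mu_1,\mu_2,\mu_3)\in\mathbb{R}^3:\ \mu_1\le \gamma R/3,\ \mu_2\ge 2\gamma R/3,\ \mu_3\ge 2\gamma R/3\}.$$ Then there exists a finite $A$ (depending on $R$) such that for every $\gamma>A$, the population log-likelihood $\mathcal{L}$ of $\mathrm{GMM}(\boldsymbol\mu^* )$ satisfies $$\mathcal{L}(0,\gamma R,\gamma R) > \sup_{\boldsymbol\mu\in\partial\mathcal{D}}\mathcal{L}(\boldsymbol\mu).$$ Consequently $\mathcal{L}$ has a local maximum in $\mathcal{D}$ that is not a global maximum.
   Context: Write $\phi(x \mid \mu, 1)$ for the density of $\mathcal{N}(\mu,1)$ on $\mathbb{R}$. For true centers $\boldsymbol{\mu}^* = (\mu_1^*,\mu_2^*,\mu_3^* )$, $\mathrm{GMM}(\boldsymbol{\mu}^* )$ is the distribution with density $\frac13\sum_{i=1}^3 \phi(x\mid \mu_i^*, 1)$. Its population log-likelihood is $$\mathcal{L}(\boldsymbol{\mu}) = \mathbb{E}_{X\sim \mathrm{GMM}(\boldsymbol{\mu}^* )} \log\Big(\frac13\sum_{i=1}^3 \phi(X\mid \mu_i, 1)\Big).$$ The global maxima of $\mathcal{L}$ are $(-R,R,\gamma R)$ and its coordinate permutations. $\partial\mathcal{D}$ denotes the union of the three faces of $\mathcal{D}$ on which one of the defining inequalities holds with equality. *)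

theory Defs
  imports "HOL-Analysis.Analysis"
begin

definition gauss_pdf :: "real \<Rightarrow> real \<Rightarrow> real" where
  "gauss_pdf x mu = exp (- ((x - mu)\<^sup>2) / 2) / sqrt (2 * pi)"

definition gmm3_pdf :: "real \<times> real \<times> real \<Rightarrow> real \<Rightarrow> real" where
  "gmm3_pdf m x = (case m of (m1, m2, m3) \<Rightarrow>
     (gauss_pdf x m1 + gauss_pdf x m2 + gauss_pdf x m3) / 3)"

definition pop_loglik :: "real \<times> real \<times> real \<Rightarrow> real \<times> real \<times> real \<Rightarrow> real" where
  "pop_loglik mstar m = (\<integral>x. gmm3_pdf mstar x * ln (gmm3_pdf m x) \<partial>lborel)"

definition regionD :: "real \<Rightarrow> real \<Rightarrow> (real \<times> real \<times> real) set" where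
  "regionD R \<gamma> = {(m1, m2, m3). m1 \<le> \<gamma> * R / 3 \<and> m2 \<ge> 2 * \<gamma> * R / 3 \<and> m3 \<ge> 2 * \<gamma> * R / 3}"

definition faces_regionD :: "real \<Rightarrow> real \<Rightarrow> (real \<times> real \<times> real) set" where
  "faces_regionD R \<gamma> = {(m1, m2, m3). (m1, m2, m3) \<in> regionD R \<gamma> \<and>
      (m1 = \<gamma> * R / 3 \<or> m2 = 2 * \<gamma> * R / 3 \<or> m3 = 2 * \<gamma> * R / 3)}"

end

theory Submission
  imports Defs "HOL-Probability.Probability"
begin

text \<open>
  The population log-likelihood is the average of \<open>l(\<mu>) = E ln p(X)\<close>, \<open>X \<sim> N(\<mu>,1)\<close>, over the
  true centres \<open>-R, R, G = \<gamma>R\<close>. Keeping a single component of the mixture \<open>p\<close> bounds \<open>l\<close>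
  from below by a Gaussian second moment. From above, Jensen's inequality \<open>E ln p \<le> ln E[p^t] / t\<close>
  and \<open>(p\<^sub>1 + p\<^sub>2 + p\<^sub>3)^t \<le> p\<^sub>1^t + p\<^sub>2^t + p\<^sub>3^t\<close> reduce \<open>l\<close> to Gaussian integrals, and for
  \<open>0 < t \<le> 1\<close> give \<open>l(\<mu>) \<le> -ln 3 - ln \<surd>(2\<pi>) - ln(1+t)/(2t) + ln (\<Sum>\<^sub>i exp(-t(\<mu>-m\<^sub>i)\<^sup>2/(2(1+t)))) / t\<close>.
  With \<open>t = 1/(8(1+R\<^sup>2))\<close> and \<open>G \<ge> 512(1+R\<^sup>2)\<close> this makes \<open>L\<close> smaller than \<open>L(0,G,G)\<close> by a fixed
  margin on the faces of \<open>D\<close> and wherever a centre leaves the box \<open>[-2G, G/3] \<times> [2G/3, 2G]\<^sup>2\<close>.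
  Hence the maximum of \<open>L\<close> over that box is attained in its interior, which lies in \<open>D\<close>, while
  \<open>L(0,0,G)\<close> exceeds \<open>L\<close> everywhere on \<open>D\<close>.
\<close>

lemma powr_add_le_add_powr:
  fixes a b t :: real
  assumes "a > 0" "b > 0" "0 < t" "t \<le> 1"
  shows "(a + b) powr t \<le> a powr t + b powr t"
proof -
  have "(a + b) powr t = (a + b) * (a + b) powr (t - 1)"
    using assms by (simp add: powr_diff)
  also have "\<dots> = a * (a + b) powr (t - 1) + b * (a + b) powr (t - 1)"
    by (simp add: distrib_right)
  also have "\<dots> \<le> a * a powr (t - 1) + b * b powr (t - 1)"
    using assms by (intro add_mono mult_left_mono powr_mono2') auto
  also have "\<dots> = a powr t + b powr t"
    using assms by (simp add: powr_diff)
  finally show ?thesis .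
qed

text \<open>The tangent-line bound \<open>ln z \<le> z - 1\<close> at \<open>z = y\<^sup>t / K\<close>; integrated against the
  Gaussian with \<open>K = E[p\<^sup>t]\<close>, it is Jensen's inequality \<open>E ln p \<le> ln E[p\<^sup>t] / t\<close>.\<close>
lemma ln_le_powr_tangent:
  fixes y K t :: real
  assumes "y > 0" "K > 0" "t > 0"
  shows "ln y \<le> (ln K - 1) / t + y powr t / (K * t)"
proof -
  have "ln (y powr t / K) \<le> y powr t / K - 1"
    using assms by (intro ln_le_minus_one) simp
  then have "ln y * t \<le> ln K - 1 + y powr t / K"
    using assms by (simp add: ln_div ln_powr mult.commute)
  then have "ln y \<le> (ln K - 1 + y powr t / K) / t"
    using assms by (simp add: pos_le_divide_eq)
  then show ?thesis
    by (simp add: add_divide_distrib)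
qed

lemma exp_neg_le_inverse:
  fixes y :: real
  assumes "y > 0"
  shows "exp (- y) \<le> 1 / y"
proof -
  have "y \<le> exp y"
    using exp_ge_add_one_self[of y] by linarith
  then have "1 / exp y \<le> 1 / y"
    using assms by (intro divide_left_mono) auto
  then show ?thesis
    by (simp add: exp_minus inverse_eq_divide)
qed

lemma square_le_square_of_abs_le: "\<bar>x\<bar> \<le> (y :: real) \<Longrightarrow> x\<^sup>2 \<le> y\<^sup>2"
  by (subst power2_le_iff_abs_le) auto

lemma square_ge_square_of_le_abs: "0 \<le> (y :: real) \<Longrightarrow> y \<le> \<bar>x\<bar> \<Longrightarrow> y\<^sup>2 \<le> x\<^sup>2"
  using square_le_square_of_abs_le[of y "\<bar>x\<bar>"] by simp

lemma diff_le_divide_one_plus: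
  fixes x t :: real
  assumes "0 \<le> x" "0 < t"
  shows "x - x * t \<le> x / (1 + t)"
proof -
  have "(x - x * t) * (1 + t) \<le> x"
    using assms by (simp add: algebra_simps power2_eq_square[symmetric])
  then show ?thesis
    using assms by (simp add: pos_le_divide_eq)
qed

lemma ln_two_ge_half: "ln (2 :: real) \<ge> 1 / 2"
  using ln_le_minus_one[of "1 / 2 :: real"] by (simp add: ln_div)

lemma compact_interior_local_max:
  fixes f :: "'a::metric_space \<Rightarrow> real"
  assumes "compact K" "continuous_on K f" "p \<in> K" and frontier: "\<And>y. y \<in> K - interior K \<Longrightarrow> f y < f p"
  obtains m where "m \<in> interior K" "\<exists>e>0. \<forall>m'. dist m' m < e \<longrightarrow> f m' \<le> f m"
proof -
  obtain m where m: "m \<in> K" "\<And>y. y \<in> K \<Longrightarrow> f y \<le> f m"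
    using continuous_attains_sup[OF assms(1) _ assms(2)] assms(3) by blast
  have "m \<in> interior K"
  proof (rule ccontr)
    assume "m \<notin> interior K"
    then have "f m < f p"
      using frontier m(1) by blast
    with m(2)[OF assms(3)] show False
      by simp
  qed
  moreover obtain e where "e > 0" "ball m e \<subseteq> K"
    using \<open>m \<in> interior K\<close> mem_interior by blast
  then have "\<forall>m'. dist m' m < e \<longrightarrow> f m' \<le> f m"
    using m(2) by (metis dist_commute mem_ball subsetD)
  ultimately show thesis
    using \<open>e > 0\<close> that by blast
qed

subsection \<open>Gaussian integrals\<close>

lemma gauss_pdf_eq_normal_density: "gauss_pdf x mu = normal_density mu 1 x"
  by (simp add: gauss_pdf_def normal_density_def)

lemma gauss_pdf_pos: "gauss_pdf x mu > 0"
  by (simp add: gauss_pdf_def)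

lemma gauss_pdf_le: "gauss_pdf x mu \<le> 1 / sqrt (2 * pi)"
  unfolding gauss_pdf_def by (simp add: divide_right_mono)

lemma borel_measurable_gauss_pdf [measurable]: "(\<lambda>x. gauss_pdf x mu) \<in> borel_measurable borel"
  unfolding gauss_pdf_def by measurable

lemma has_bochner_integral_gauss_pdf: "has_bochner_integral lborel (\<lambda>x. gauss_pdf x mu) 1"
  using integral_normal_density[of 1 mu] integrable_normal_density[of 1 mu]
  by (simp add: has_bochner_integral_iff gauss_pdf_eq_normal_density[abs_def])

lemma integrable_gauss_pdf: "integrable lborel (\<lambda>x. gauss_pdf x mu)"
  using has_bochner_integral_gauss_pdf by (rule integrable.intros)

lemma has_bochner_integral_gauss_pdf_sq:
  "has_bochner_integral lborel (\<lambda>x. gauss_pdf x mu * (x - m)\<^sup>2) (1 + (mu - m)\<^sup>2)"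
proof -
  have "has_bochner_integral lborel (\<lambda>x. normal_density mu 1 x * (x - mu) ^ (2 * 1)
      + 2 * (mu - m) * (normal_density mu 1 x * (x - mu) ^ (2 * 0 + 1))
      + (mu - m)\<^sup>2 * normal_density mu 1 x) (1 + 2 * (mu - m) * 0 + (mu - m)\<^sup>2 * 1)"
    using normal_moment_even[where k=1 and \<sigma>=1 and \<mu>=mu] normal_moment_odd[where k=0 and \<sigma>=1 and \<mu>=mu]
      has_bochner_integral_gauss_pdf[of mu]
    by (intro has_bochner_integral_add has_bochner_integral_mult_right)
       (simp_all add: gauss_pdf_eq_normal_density[abs_def])
  then show ?thesis
    by (simp add: gauss_pdf_eq_normal_density power2_eq_square algebra_simps)
qed

lemma integrable_gauss_pdf_sq: "integrable lborel (\<lambda>x. gauss_pdf x mu * (x - m)\<^sup>2)"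
  using has_bochner_integral_gauss_pdf_sq by (rule integrable.intros)

lemma gauss_exponent_complete_square:
  fixes t x mu m s :: real
  assumes t: "t > -1" and ss: "s\<^sup>2 = 1 / (1 + t)"
  shows "-t * (mu - m)\<^sup>2 / (2 * (1 + t)) - (x - (mu + t * m) / (1 + t))\<^sup>2 / (2 * s\<^sup>2)
        = - ((x - mu)\<^sup>2) / 2 - t * (x - m)\<^sup>2 / 2"
proof -
  define u where "u = (1 + t) * x - mu - t * m"
  have t1: "1 + t > 0" using t by simp
  have "x - (mu + t * m) / (1 + t) = u / (1 + t)"
    using t1 unfolding u_def by (simp add: field_simps)
  then have "(x - (mu + t * m) / (1 + t))\<^sup>2 / (2 * s\<^sup>2) = u\<^sup>2 / (2 * (1 + t))"
    unfolding ss using t1 by (simp add: power2_eq_square)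
  moreover have "u\<^sup>2 + t * (mu - m)\<^sup>2 = (1 + t) * ((x - mu)\<^sup>2 + t * (x - m)\<^sup>2)"
    unfolding u_def by (simp add: power2_eq_square algebra_simps)
  ultimately show ?thesis using t1 by (simp add: field_simps)
qed

lemma has_bochner_integral_gauss_pdf_exp_sq:
  assumes t: "t > -1"
  shows "has_bochner_integral lborel (\<lambda>x. gauss_pdf x mu * exp (-t * (x - m)\<^sup>2 / 2))
           (exp (-t * (mu - m)\<^sup>2 / (2 * (1 + t))) / sqrt (1 + t))"
proof -
  define s where "s = 1 / sqrt (1 + t)"
  define x0 where "x0 = (mu + t * m) / (1 + t)"
  define c where "c = exp (-t * (mu - m)\<^sup>2 / (2 * (1 + t))) / sqrt (1 + t)"
  have s: "s > 0" and ss: "s\<^sup>2 = 1 / (1 + t)"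
    using t by (simp_all add: s_def power_divide)
  have "has_bochner_integral lborel (\<lambda>x. c * normal_density x0 s x) (c * 1)"
    using integral_normal_density[OF s, of x0] integrable_normal_density[OF s, of x0]
    by (intro has_bochner_integral_mult_right) (simp add: has_bochner_integral_iff)
  moreover have "c * normal_density x0 s x = gauss_pdf x mu * exp (-t * (x - m)\<^sup>2 / 2)" for x
  proof -
    have "normal_density x0 s x = sqrt (1 + t) / sqrt (2 * pi) * exp (- (x - x0)\<^sup>2 / (2 * s\<^sup>2))"
      unfolding normal_density_def using t s by (simp add: ss real_sqrt_divide real_sqrt_mult field_simps)
    then have "c * normal_density x0 s x
        = exp (-t * (mu - m)\<^sup>2 / (2 * (1 + t))) * exp (- (x - x0)\<^sup>2 / (2 * s\<^sup>2)) / sqrt (2 * pi)"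
      using t by (simp add: c_def)
    also have "\<dots> = exp (- ((x - mu)\<^sup>2) / 2 - t * (x - m)\<^sup>2 / 2) / sqrt (2 * pi)"
      unfolding x0_def gauss_exponent_complete_square[OF t ss, symmetric] exp_diff
      by (simp add: exp_minus field_simps)
    finally show ?thesis
      unfolding gauss_pdf_def exp_diff by (simp add: exp_minus field_simps)
  qed
  ultimately show ?thesis by (simp add: c_def)
qed

definition gauss_log_const :: real where "gauss_log_const = ln (sqrt (2 * pi))"

lemma gauss_log_const_pos: "gauss_log_const > 0"
  unfolding gauss_log_const_def using pi_gt3 by simp

lemma ln_scaled_gauss_pdf: "w > 0 \<Longrightarrow> ln (w * gauss_pdf x m) = ln w - gauss_log_const - (x - m)\<^sup>2 / 2"
  unfolding gauss_pdf_def gauss_log_const_def by (simp add: ln_mult ln_div)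

lemma gmm3_pdf_simps: "gmm3_pdf (m1, m2, m3) x = (gauss_pdf x m1 + gauss_pdf x m2 + gauss_pdf x m3) / 3"
  by (simp add: gmm3_pdf_def)

lemma gmm3_pdf_pos: "gmm3_pdf m x > 0"
  by (cases m) (auto simp: gmm3_pdf_simps intro!: add_pos_pos gauss_pdf_pos)

lemma borel_measurable_gmm3_pdf [measurable]: "(\<lambda>x. gmm3_pdf m x) \<in> borel_measurable borel"
  by (cases m) (simp add: gmm3_pdf_simps)

lemma ln_gmm3_pdf_le: "ln (gmm3_pdf m x) \<le> - gauss_log_const"
proof (cases m)
  case (fields a b c)
  have "gmm3_pdf m x \<le> 1 / sqrt (2 * pi)"
    using gauss_pdf_le[of x a] gauss_pdf_le[of x b] gauss_pdf_le[of x c] fields by (simp add: gmm3_pdf_simps)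
  then have "ln (gmm3_pdf m x) \<le> ln (1 / sqrt (2 * pi))"
    using gmm3_pdf_pos by (subst ln_le_cancel_iff) auto
  then show ?thesis unfolding gauss_log_const_def by (simp add: ln_div)
qed

lemma ln_gmm3_pdf_ge:
  assumes "gmm3_pdf m x \<ge> w * gauss_pdf x a" "w > 0"
  shows "ln (gmm3_pdf m x) \<ge> ln w - gauss_log_const - (x - a)\<^sup>2 / 2"
proof -
  have "ln (w * gauss_pdf x a) \<le> ln (gmm3_pdf m x)"
    using assms gauss_pdf_pos[of x a] gmm3_pdf_pos[of m x] by (subst ln_le_cancel_iff) auto
  then show ?thesis using ln_scaled_gauss_pdf[OF assms(2)] by simp
qed

lemma gmm3_pdf_ge_fst: "gmm3_pdf m x \<ge> 1 / 3 * gauss_pdf x (fst m)"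
  by (cases m) (auto simp: gmm3_pdf_simps intro: add_nonneg_nonneg less_imp_le[OF gauss_pdf_pos])

lemma norm_gauss_pdf_ln_gmm3_pdf_le:
  assumes "\<bar>fst m\<bar> \<le> K"
  shows "norm (gauss_pdf x mu * ln (gmm3_pdf m x))
    \<le> (gauss_log_const + ln 3 + K\<^sup>2) * gauss_pdf x mu + gauss_pdf x mu * x\<^sup>2"
proof -
  have p: "gauss_pdf x mu > 0" by (rule gauss_pdf_pos)
  have upper: "ln (gmm3_pdf m x) \<le> 0"
    using ln_gmm3_pdf_le[of m x] gauss_log_const_pos by linarith
  have "- ln (gmm3_pdf m x) \<le> gauss_log_const + ln 3 + (x - fst m)\<^sup>2 / 2"
    using ln_gmm3_pdf_ge[OF gmm3_pdf_ge_fst[of x m]] by (simp add: ln_div)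
  moreover have "(x - fst m)\<^sup>2 / 2 \<le> x\<^sup>2 + K\<^sup>2"
    using assms abs_le_square_iff[of "fst m" K] zero_le_power2[of "x + fst m"]
    by (simp add: power2_eq_square algebra_simps)
  ultimately have "- ln (gmm3_pdf m x) \<le> gauss_log_const + ln 3 + K\<^sup>2 + x\<^sup>2" by simp
  then have "norm (gauss_pdf x mu * ln (gmm3_pdf m x)) \<le> gauss_pdf x mu * (gauss_log_const + ln 3 + K\<^sup>2 + x\<^sup>2)"
    using p upper mult_left_mono[of "- ln (gmm3_pdf m x)" _ "gauss_pdf x mu"] by (simp add: abs_mult)
  then show ?thesis by (simp add: algebra_simps)
qed

lemma integrable_dominating_weight:
  "integrable lborel (\<lambda>x. c * gauss_pdf x mu + gauss_pdf x mu * x\<^sup>2)"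
  using integrable_gauss_pdf[of mu] integrable_gauss_pdf_sq[of mu 0] by simp

lemma integrable_gauss_pdf_ln_gmm3_pdf: "integrable lborel (\<lambda>x. gauss_pdf x mu * ln (gmm3_pdf m x))"
proof (rule Bochner_Integration.integrable_bound[OF integrable_dominating_weight])
  show "AE x in lborel. norm (gauss_pdf x mu * ln (gmm3_pdf m x))
      \<le> norm ((gauss_log_const + ln 3 + \<bar>fst m\<bar>\<^sup>2) * gauss_pdf x mu + gauss_pdf x mu * x\<^sup>2)"
    by (intro AE_I2 order.trans[OF norm_gauss_pdf_ln_gmm3_pdf_le[OF order.refl]]) simp
qed measurable

definition component_loglik :: "real \<Rightarrow> real \<times> real \<times> real \<Rightarrow> real" where
  "component_loglik mu m = (\<integral>x. gauss_pdf x mu * ln (gmm3_pdf m x) \<partial>lborel)"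

lemma pop_loglik_eq_component_loglik:
  "pop_loglik (a1, a2, a3) m = (component_loglik a1 m + component_loglik a2 m + component_loglik a3 m) / 3"
proof -
  have "pop_loglik (a1, a2, a3) m = (\<integral>x. (gauss_pdf x a1 * ln (gmm3_pdf m x) + gauss_pdf x a2 * ln (gmm3_pdf m x)
     + gauss_pdf x a3 * ln (gmm3_pdf m x)) / 3 \<partial>lborel)"
    unfolding pop_loglik_def by (intro Bochner_Integration.integral_cong) (auto simp: gmm3_pdf_simps field_simps)
  then show ?thesis
    unfolding component_loglik_def using integrable_gauss_pdf_ln_gmm3_pdf by simp
qed

lemma continuous_on_component_loglik: "continuous_on {m :: real \<times> real \<times> real. \<bar>fst m\<bar> \<le> K} (component_loglik mu)"
proof (rule continuous_on_sequentiallyI)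
  fix u :: "nat \<Rightarrow> real \<times> real \<times> real" and a
  assume u: "\<forall>n. u n \<in> {m. \<bar>fst m\<bar> \<le> K}" and "u \<longlonglongrightarrow> a"
  then have "(\<lambda>n. gmm3_pdf (u n) x) \<longlonglongrightarrow> gmm3_pdf a x" for x
    unfolding gmm3_pdf_def gauss_pdf_def case_prod_beta by (intro tendsto_intros) auto
  then have "(\<lambda>n. gauss_pdf x mu * ln (gmm3_pdf (u n) x)) \<longlonglongrightarrow> gauss_pdf x mu * ln (gmm3_pdf a x)" for x
    using gmm3_pdf_pos[of a x] by (intro tendsto_intros) auto
  then show "(\<lambda>n. component_loglik mu (u n)) \<longlonglongrightarrow> component_loglik mu a"
    unfolding component_loglik_def
    using u norm_gauss_pdf_ln_gmm3_pdf_le[of "u _" K]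
    by (intro integral_dominated_convergence[OF _ _ integrable_dominating_weight[of "gauss_log_const + ln 3 + K\<^sup>2" mu]])
       (auto intro!: AE_I2)
qed

lemma continuous_on_pop_loglik: "continuous_on {m :: real \<times> real \<times> real. \<bar>fst m\<bar> \<le> K} (pop_loglik (a1, a2, a3))"
  unfolding pop_loglik_eq_component_loglik[abs_def]
  by (intro continuous_intros continuous_on_component_loglik) simp

lemma component_loglik_ge:
  assumes "\<And>x. gmm3_pdf m x \<ge> w * gauss_pdf x a" "w > 0"
  shows "component_loglik mu m \<ge> ln w - gauss_log_const - (1 + (mu - a)\<^sup>2) / 2"
proof -
  have "(\<integral>x. (ln w - gauss_log_const) * gauss_pdf x mu - 1/2 * (gauss_pdf x mu * (x - a)\<^sup>2) \<partial>lborel)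
        \<le> component_loglik mu m"
    unfolding component_loglik_def
  proof (rule integral_mono[OF _ integrable_gauss_pdf_ln_gmm3_pdf])
    show "integrable lborel (\<lambda>x. (ln w - gauss_log_const) * gauss_pdf x mu - 1/2 * (gauss_pdf x mu * (x - a)\<^sup>2))"
      using integrable_gauss_pdf integrable_gauss_pdf_sq by simp
    fix x
    have "gauss_pdf x mu * (ln w - gauss_log_const - (x - a)\<^sup>2 / 2) \<le> gauss_pdf x mu * ln (gmm3_pdf m x)"
      using ln_gmm3_pdf_ge[OF assms] gauss_pdf_pos[of x mu] by (intro mult_left_mono) auto
    then show "(ln w - gauss_log_const) * gauss_pdf x mu - 1/2 * (gauss_pdf x mu * (x - a)\<^sup>2)
        \<le> gauss_pdf x mu * ln (gmm3_pdf m x)"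
      by (simp add: algebra_simps)
  qed
  moreover have "(\<integral>x. (ln w - gauss_log_const) * gauss_pdf x mu - 1/2 * (gauss_pdf x mu * (x - a)\<^sup>2) \<partial>lborel)
     = ln w - gauss_log_const - (1 + (mu - a)\<^sup>2) / 2"
    using has_bochner_integral_integral_eq[OF has_bochner_integral_gauss_pdf_sq[of mu a]]
      has_bochner_integral_integral_eq[OF has_bochner_integral_gauss_pdf[of mu]]
      integrable_gauss_pdf_sq integrable_gauss_pdf by simp
  ultimately show ?thesis by simp
qed

definition overlap :: "real \<Rightarrow> real \<Rightarrow> real \<times> real \<times> real \<Rightarrow> real" where
  "overlap t mu m = (case m of (m1, m2, m3) \<Rightarrow>
     exp (-t * (mu - m1)\<^sup>2 / (2 * (1 + t))) + exp (-t * (mu - m2)\<^sup>2 / (2 * (1 + t)))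
   + exp (-t * (mu - m3)\<^sup>2 / (2 * (1 + t))))"

lemma overlap_pos: "overlap t mu m > 0"
  by (cases m) (simp add: overlap_def add_pos_pos)

lemma gmm3_pdf_powr_le:
  assumes "0 < t" "t \<le> 1"
  shows "gmm3_pdf (m1, m2, m3) x powr t \<le> exp (-t * (ln 3 + gauss_log_const))
     * (exp (-t * (x - m1)\<^sup>2 / 2) + exp (-t * (x - m2)\<^sup>2 / 2) + exp (-t * (x - m3)\<^sup>2 / 2))"
proof -
  define a where "a c = gauss_pdf x c / 3" for c
  have a_pos: "a c > 0" for c
    unfolding a_def using gauss_pdf_pos by simp
  have a_powr: "a c powr t = exp (-t * (ln 3 + gauss_log_const)) * exp (-t * (x - c)\<^sup>2 / 2)" for c
  proof -
    have ln_a: "ln (a c) = - ln 3 - gauss_log_const - (x - c)\<^sup>2 / 2"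
      using ln_scaled_gauss_pdf[of "1/3" x c] unfolding a_def by (simp add: ln_div)
    have "a c powr t = exp (t * ln (a c))"
      using a_pos[of c] by (simp add: powr_def)
    also have "\<dots> = exp (-t * (ln 3 + gauss_log_const) + -t * (x - c)\<^sup>2 / 2)"
      unfolding ln_a by (simp add: algebra_simps)
    finally show ?thesis
      unfolding exp_add .
  qed
  have "gmm3_pdf (m1, m2, m3) x powr t = (a m1 + a m2 + a m3) powr t"
    unfolding a_def gmm3_pdf_simps by (simp add: add_divide_distrib)
  also have "\<dots> \<le> (a m1 + a m2) powr t + a m3 powr t"
    using a_pos assms by (intro powr_add_le_add_powr add_pos_pos) auto
  also have "\<dots> \<le> a m1 powr t + a m2 powr t + a m3 powr t"
    using a_pos assms powr_add_le_add_powr[of "a m1" "a m2" t] by simp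
  finally show ?thesis
    unfolding a_powr by (simp add: algebra_simps)
qed

lemma has_bochner_integral_gauss_pdf_overlap:
  assumes "t > -1"
  shows "has_bochner_integral lborel
    (\<lambda>x. gauss_pdf x mu * (exp (-t * (x - m1)\<^sup>2 / 2) + exp (-t * (x - m2)\<^sup>2 / 2) + exp (-t * (x - m3)\<^sup>2 / 2)))
    (overlap t mu (m1, m2, m3) / sqrt (1 + t))"
  using has_bochner_integral_add[OF has_bochner_integral_add, OF has_bochner_integral_gauss_pdf_exp_sq
      has_bochner_integral_gauss_pdf_exp_sq has_bochner_integral_gauss_pdf_exp_sq, OF assms assms assms]
  by (simp add: overlap_def distrib_left add_divide_distrib)

lemma component_loglik_le_overlap:
  assumes t: "0 < t" "t \<le> 1"
  shows "component_loglik mu (m1, m2, m3)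
    \<le> - ln 3 - gauss_log_const - ln (1 + t) / (2 * t) + ln (overlap t mu (m1, m2, m3)) / t"
proof -
  define E0 where "E0 = exp (-t * (ln 3 + gauss_log_const))"
  define h where "h x = E0 * (exp (-t * (x - m1)\<^sup>2 / 2) + exp (-t * (x - m2)\<^sup>2 / 2) + exp (-t * (x - m3)\<^sup>2 / 2))" for x
  define K where "K = E0 * overlap t mu (m1, m2, m3) / sqrt (1 + t)"
  have K: "K > 0"
    unfolding K_def E0_def using overlap_pos t by simp
  have h_int: "has_bochner_integral lborel (\<lambda>x. gauss_pdf x mu * h x) K"
    using has_bochner_integral_mult_right[OF has_bochner_integral_gauss_pdf_overlap[of t mu m1 m2 m3], of E0] t
    by (simp add: h_def K_def algebra_simps)
  have pointwise: "gauss_pdf x mu * ln (gmm3_pdf (m1, m2, m3) x)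
      \<le> (ln K - 1) / t * gauss_pdf x mu + 1 / (K * t) * (gauss_pdf x mu * h x)" for x
  proof -
    have "gmm3_pdf (m1, m2, m3) x powr t / (K * t) \<le> h x / (K * t)"
      using gmm3_pdf_powr_le[OF t, of m1 m2 m3 x] K t unfolding h_def E0_def by (intro divide_right_mono) auto
    then have "ln (gmm3_pdf (m1, m2, m3) x) \<le> (ln K - 1) / t + h x / (K * t)"
      using ln_le_powr_tangent[OF gmm3_pdf_pos[of "(m1, m2, m3)" x] K t(1)] by linarith
    then have "gauss_pdf x mu * ln (gmm3_pdf (m1, m2, m3) x) \<le> gauss_pdf x mu * ((ln K - 1) / t + h x / (K * t))"
      using gauss_pdf_pos[of x mu] by (intro mult_left_mono) auto
    then show ?thesis
      by (simp add: algebra_simps)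
  qed
  have "component_loglik mu (m1, m2, m3)
      \<le> (\<integral>x. (ln K - 1) / t * gauss_pdf x mu + 1 / (K * t) * (gauss_pdf x mu * h x) \<partial>lborel)"
    unfolding component_loglik_def using integrable_gauss_pdf integrable.intros[OF h_int]
    by (intro integral_mono[OF integrable_gauss_pdf_ln_gmm3_pdf] pointwise) simp
  also have "\<dots> = ln K / t"
    using integrable_gauss_pdf integrable.intros[OF h_int] has_bochner_integral_integral_eq[OF h_int]
      has_bochner_integral_integral_eq[OF has_bochner_integral_gauss_pdf[of mu]] K t
    by (simp add: field_simps)
  also have "ln K = -t * (ln 3 + gauss_log_const) + ln (overlap t mu (m1, m2, m3)) - ln (1 + t) / 2"
    unfolding K_def E0_def using overlap_pos[of t mu "(m1, m2, m3)"] t by (simp add: ln_mult ln_div ln_sqrt)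
  finally show ?thesis
    using t by (simp add: field_simps)
qed

subsection \<open>Estimates of the overlap\<close>

lemma exp_overlap_antimono: "(t :: real) > 0 \<Longrightarrow> Q \<le> d \<Longrightarrow> exp (-t * d / (2 * (1 + t))) \<le> exp (-t * Q / (2 * (1 + t)))"
  by (simp add: divide_right_mono mult_left_mono)

lemma exp_overlap_le_one: "(t :: real) \<ge> 0 \<Longrightarrow> exp (-t * d\<^sup>2 / (2 * (1 + t))) \<le> 1"
  by (simp add: divide_nonneg_pos)

lemma overlap_swap23: "overlap t mu (m1, m2, m3) = overlap t mu (m1, m3, m2)"
  unfolding overlap_def by simp

lemma ln_overlap_le_far:
  assumes t: "t > 0" and "Q \<le> (mu - m1)\<^sup>2" "Q \<le> (mu - m2)\<^sup>2" "Q \<le> (mu - m3)\<^sup>2"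
  shows "ln (overlap t mu (m1, m2, m3)) / t \<le> ln 3 / t - Q / (2 * (1 + t))"
proof -
  have "overlap t mu (m1, m2, m3) \<le> 3 * exp (-t * Q / (2 * (1 + t)))"
    unfolding overlap_def prod.case
    using exp_overlap_antimono[OF t assms(2)] exp_overlap_antimono[OF t assms(3)] exp_overlap_antimono[OF t assms(4)]
    by linarith
  then have "ln (overlap t mu (m1, m2, m3)) \<le> ln (3 * exp (-t * Q / (2 * (1 + t))))"
    using overlap_pos by (rule ln_mono)
  then have "ln (overlap t mu (m1, m2, m3)) \<le> ln 3 - t * Q / (2 * (1 + t))"
    by (simp add: ln_mult)
  then have "ln (overlap t mu (m1, m2, m3)) / t \<le> (ln 3 - t * Q / (2 * (1 + t))) / t"
    using t by (intro divide_right_mono) auto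
  also have "\<dots> = ln 3 / t - Q / (2 * (1 + t))"
    using t by (simp add: diff_divide_distrib)
  finally show ?thesis .
qed

lemma ln_overlap_le: "t > 0 \<Longrightarrow> ln (overlap t mu (m1, m2, m3)) / t \<le> ln 3 / t"
  using ln_overlap_le_far[of t 0] by simp

text \<open>One centre within \<open>\<surd>P\<close> of \<open>\<mu>\<close>, the other two farther than \<open>\<surd>Q\<close>: the near term dominates
  and the far ones cost a relative error \<open>O(1/(t(Q - P)))\<close>, using \<open>e\<^sup>-\<^sup>y \<le> 1/y\<close>.\<close>
lemma ln_overlap_le_near:
  assumes t: "0 < t" "t \<le> 1" and near: "(mu - m1)\<^sup>2 \<le> P"
    and far: "Q \<le> (mu - m2)\<^sup>2" "Q \<le> (mu - m3)\<^sup>2" and PQ: "P < Q"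
  shows "ln (overlap t mu (m1, m2, m3)) / t \<le> - (mu - m1)\<^sup>2 / (2 * (1 + t)) + 8 / (t\<^sup>2 * (Q - P))"
proof -
  define a where "a = exp (-t * (mu - m1)\<^sup>2 / (2 * (1 + t)))"
  define e where "e = exp (-t * Q / (2 * (1 + t)))"
  have a: "a > 0" and e: "e > 0" unfolding a_def e_def by simp_all
  have "e / a = exp (- (t * (Q - (mu - m1)\<^sup>2) / (2 * (1 + t))))"
    unfolding a_def e_def exp_diff[symmetric] by (simp add: diff_divide_distrib algebra_simps)
  also have "\<dots> \<le> exp (- (t * (Q - P) / (2 * (1 + t))))"
    using t near by (simp add: divide_right_mono mult_left_mono)
  also have "\<dots> \<le> 2 * (1 + t) / (t * (Q - P))"
    using exp_neg_le_inverse[of "t * (Q - P) / (2 * (1 + t))"] t PQ by simp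
  also have "\<dots> \<le> 4 / (t * (Q - P))"
    using t PQ by (intro divide_right_mono) auto
  finally have ea: "e / a \<le> 4 / (t * (Q - P))" .
  have "overlap t mu (m1, m2, m3) \<le> a + 2 * e"
    unfolding overlap_def a_def e_def prod.case
    using exp_overlap_antimono[OF t(1) far(1)] exp_overlap_antimono[OF t(1) far(2)] by linarith
  also have "\<dots> = a * (1 + 2 * (e / a))"
    using a by (simp add: field_simps)
  finally have "overlap t mu (m1, m2, m3) \<le> a * (1 + 2 * (e / a))" .
  then have "ln (overlap t mu (m1, m2, m3)) \<le> ln (a * (1 + 2 * (e / a)))"
    using overlap_pos by (rule ln_mono)
  also have "\<dots> = ln a + ln (1 + 2 * (e / a))"
    using a e by (intro ln_mult_pos) (auto intro: add_pos_pos)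
  also have "\<dots> \<le> ln a + 2 * (e / a)"
    using a e by (simp add: ln_add_one_self_le_self)
  also have "\<dots> \<le> -t * (mu - m1)\<^sup>2 / (2 * (1 + t)) + 8 / (t * (Q - P))"
    using ea unfolding a_def by simp
  finally have "ln (overlap t mu (m1, m2, m3)) / t \<le> (-t * (mu - m1)\<^sup>2 / (2 * (1 + t)) + 8 / (t * (Q - P))) / t"
    using t by (intro divide_right_mono) auto
  also have "\<dots> = - (mu - m1)\<^sup>2 / (2 * (1 + t)) + 8 / (t\<^sup>2 * (Q - P))"
    using t PQ by (simp add: field_simps power2_eq_square)
  finally show ?thesis .
qed

lemma ln_overlap_le_two_far:
  assumes t: "0 < t" "t \<le> 1" and "Q \<le> (mu - m1)\<^sup>2" "Q \<le> (mu - m2)\<^sup>2" and Q: "Q > 0"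
  shows "ln (overlap t mu (m1, m2, m3)) / t \<le> 8 / (t\<^sup>2 * Q)"
proof -
  define e where "e = exp (-t * Q / (2 * (1 + t)))"
  have e: "e > 0" unfolding e_def by simp
  have "overlap t mu (m1, m2, m3) \<le> 1 + 2 * e"
    unfolding overlap_def e_def prod.case
    using exp_overlap_antimono[OF t(1) assms(3)] exp_overlap_antimono[OF t(1) assms(4)]
      exp_overlap_le_one[of t "mu - m3"] t by linarith
  then have "ln (overlap t mu (m1, m2, m3)) \<le> ln (1 + 2 * e)"
    using overlap_pos by (rule ln_mono)
  also have "\<dots> \<le> 2 * e"
    using e by (intro ln_add_one_self_le_self) simp
  also have "\<dots> \<le> 2 * (2 * (1 + t) / (t * Q))"
    using exp_neg_le_inverse[of "t * Q / (2 * (1 + t))"] t Q unfolding e_def by (simp add: field_simps)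
  also have "\<dots> \<le> 8 / (t * Q)"
    using t Q by (simp add: divide_right_mono)
  finally have "ln (overlap t mu (m1, m2, m3)) / t \<le> 8 / (t * Q) / t"
    using t by (intro divide_right_mono) auto
  then show ?thesis
    by (simp add: power2_eq_square ac_simps)
qed

lemma ln_overlap_one_le:
  assumes "Q \<le> (mu - m1)\<^sup>2" and Q: "Q > 0"
  shows "ln (overlap 1 mu (m1, m2, m3)) \<le> ln 2 + 2 / Q"
proof -
  define e where "e = exp (- 1 * Q / (2 * (1 + 1)))"
  have e: "e > 0" unfolding e_def by simp
  have "overlap 1 mu (m1, m2, m3) \<le> e + 2"
    unfolding overlap_def e_def prod.case
    using exp_overlap_antimono[of 1, OF _ assms(1)] exp_overlap_le_one[OF zero_le_one, of "mu - m2"]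
      exp_overlap_le_one[OF zero_le_one, of "mu - m3"] by linarith
  then have "overlap 1 mu (m1, m2, m3) \<le> 2 * (1 + e / 2)"
    by simp
  then have "ln (overlap 1 mu (m1, m2, m3)) \<le> ln (2 * (1 + e / 2))"
    using overlap_pos by (rule ln_mono)
  also have "\<dots> = ln 2 + ln (1 + e / 2)"
    using e by (intro ln_mult_pos) (auto intro: add_pos_pos)
  also have "ln (1 + e / 2) \<le> e / 2"
    using e by (intro ln_add_one_self_le_self) simp
  also have "e / 2 \<le> 2 / Q"
    using exp_neg_le_inverse[of "Q / 4"] Q unfolding e_def by simp
  finally show ?thesis by simp
qed

lemma component_loglik_le_near:
  assumes t: "0 < t" "t \<le> 1" and R: "R > 0" and G: "G \<ge> 12 * R" and mu: "\<bar>mu\<bar> \<le> R"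
    and m1: "- G / 3 \<le> m1" "m1 \<le> G / 3" and m2: "m2 \<ge> 2 * G / 3" and m3: "m3 \<ge> 2 * G / 3"
  shows "component_loglik mu (m1, m2, m3)
    \<le> - ln 3 - gauss_log_const - ln (1 + t) / (2 * t) - (mu - m1)\<^sup>2 / (2 * (1 + t)) + 48 / (t\<^sup>2 * G\<^sup>2)"
proof -
  define P where "P = (G / 3 + R)\<^sup>2"
  define Q where "Q = (2 * G / 3 - R)\<^sup>2"
  have near: "(mu - m1)\<^sup>2 \<le> P"
    unfolding P_def using mu m1 by (intro square_le_square_of_abs_le) auto
  have far: "Q \<le> (mu - m2)\<^sup>2" "Q \<le> (mu - m3)\<^sup>2"
    unfolding Q_def using mu m2 m3 G R by (intro square_ge_square_of_le_abs; auto)+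
  have "Q - P = G * (G / 3 - 2 * R)"
    unfolding P_def Q_def by (simp add: power2_eq_square algebra_simps)
  also have "\<dots> \<ge> G * (G / 6)"
    using G R by (intro mult_left_mono) auto
  finally have QP: "Q - P \<ge> G\<^sup>2 / 6"
    by (simp add: power2_eq_square)
  have G2: "G\<^sup>2 > 0"
    using G R by simp
  have PQ: "P < Q"
    using QP G2 by linarith
  have "8 / (t\<^sup>2 * (Q - P)) \<le> 8 / (t\<^sup>2 * (G\<^sup>2 / 6))"
    using QP t G2 PQ by (intro divide_left_mono mult_left_mono mult_pos_pos) auto
  then have "8 / (t\<^sup>2 * (Q - P)) \<le> 48 / (t\<^sup>2 * G\<^sup>2)"
    by simp
  then show ?thesis
    using ln_overlap_le_near[OF t near far PQ] component_loglik_le_overlap[OF t, of mu m1 m2 m3] by linarith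
qed

lemma component_loglik_le_far:
  assumes t: "0 < t" "t \<le> 1" and R: "R > 0" and G: "G \<ge> 12 * R" and mu: "\<bar>mu\<bar> \<le> R"
    and m1: "m1 \<le> - G / 3" and m2: "m2 \<ge> 2 * G / 3" and m3: "m3 \<ge> 2 * G / 3"
  shows "component_loglik mu (m1, m2, m3)
    \<le> - ln 3 - gauss_log_const - ln (1 + t) / (2 * t) + ln 3 / t - G\<^sup>2 / (32 * (1 + t))"
proof -
  have "(G / 4)\<^sup>2 \<le> (mu - m1)\<^sup>2" "(G / 4)\<^sup>2 \<le> (mu - m2)\<^sup>2" "(G / 4)\<^sup>2 \<le> (mu - m3)\<^sup>2"
    using mu m1 m2 m3 G R by (intro square_ge_square_of_le_abs; auto)+
  moreover have "(G / 4)\<^sup>2 / (2 * (1 + t)) = G\<^sup>2 / (32 * (1 + t))"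
    by (simp add: power_divide)
  ultimately show ?thesis
    using ln_overlap_le_far[OF t(1)] component_loglik_le_overlap[OF t, of mu m1 m2 m3] by fastforce
qed

lemma component_loglik_le:
  "0 < t \<Longrightarrow> t \<le> 1 \<Longrightarrow>
    component_loglik mu (m1, m2, m3) \<le> - ln 3 - gauss_log_const - ln (1 + t) / (2 * t) + ln 3 / t"
  using component_loglik_le_overlap[of t mu m1 m2 m3] ln_overlap_le[of t mu m1 m2 m3] by linarith

lemma component_loglik_le_two_far:
  assumes t: "0 < t" "t \<le> 1" and "G > 0" and m1: "m1 \<le> G / 3"
    and m2: "m2 \<ge> 2 * G / 3" and m3: "m3 \<ge> 2 * G / 3"
    and far: "m2 = 2 * G / 3 \<or> m2 \<ge> 2 * G \<or> m3 = 2 * G / 3 \<or> m3 \<ge> 2 * G"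
  shows "component_loglik G (m1, m2, m3) \<le> - ln 3 - gauss_log_const - ln (1 + t) / (2 * t) + 72 / (t\<^sup>2 * G\<^sup>2)"
proof -
  define Q where "Q = (G / 3)\<^sup>2"
  have Q: "Q > 0" and "72 / (t\<^sup>2 * G\<^sup>2) = 8 / (t\<^sup>2 * Q)"
    unfolding Q_def using \<open>G > 0\<close> by (simp_all add: power_divide)
  have near1: "Q \<le> (G - m1)\<^sup>2"
    unfolding Q_def using m1 \<open>G > 0\<close> by (intro square_ge_square_of_le_abs) auto
  have "ln (overlap t G (m1, m2, m3)) / t \<le> 8 / (t\<^sup>2 * Q)"
  proof (cases "m2 = 2 * G / 3 \<or> m2 \<ge> 2 * G")
    case True
    then have "Q \<le> (G - m2)\<^sup>2"
      unfolding Q_def using \<open>G > 0\<close> by (intro square_ge_square_of_le_abs) auto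
    then show ?thesis
      using ln_overlap_le_two_far[OF t near1 _ Q] by blast
  next
    case False
    then have "Q \<le> (G - m3)\<^sup>2"
      unfolding Q_def using far m3 \<open>G > 0\<close> by (intro square_ge_square_of_le_abs) auto
    then show ?thesis
      using ln_overlap_le_two_far[OF t near1 _ Q] overlap_swap23 by metis
  qed
  then show ?thesis
    using component_loglik_le_overlap[OF t, of G m1 m2 m3] \<open>72 / _ = _\<close> by simp
qed

lemma component_loglik_le_one_far:
  assumes "G > 0" and "m1 \<le> G / 3"
  shows "component_loglik G (m1, m2, m3) \<le> - ln 3 - gauss_log_const + ln 2 / 2 + 9 / (2 * G\<^sup>2)"
proof -
  have "(2 * G / 3)\<^sup>2 \<le> (G - m1)\<^sup>2"
    using assms by (intro square_ge_square_of_le_abs) auto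
  from ln_overlap_one_le[OF this] have "ln (overlap 1 G (m1, m2, m3)) \<le> ln 2 + 9 / (2 * G\<^sup>2)"
    using assms by (simp add: power_divide power2_eq_square)
  then show ?thesis
    using component_loglik_le_overlap[of 1 G m1 m2 m3] by simp
qed

lemma pop_loglik_ge_at_0GG:
  "pop_loglik (-R, R, G) (0, G, G) \<ge> - ln 3 - gauss_log_const - 1 / 2 - R\<^sup>2 / 3 + ln 2 / 3"
proof -
  have "component_loglik mu (0, G, G) \<ge> ln (1 / 3) - gauss_log_const - (1 + (mu - 0)\<^sup>2) / 2" for mu
    by (rule component_loglik_ge) (auto simp: gmm3_pdf_simps less_imp_le[OF gauss_pdf_pos])
  then have outer: "component_loglik mu (0, G, G) \<ge> - ln 3 - gauss_log_const - (1 + mu\<^sup>2) / 2" for mu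
    by (simp add: ln_div)
  have "component_loglik G (0, G, G) \<ge> ln (2 / 3) - gauss_log_const - (1 + (G - G)\<^sup>2) / 2"
    by (rule component_loglik_ge) (auto simp: gmm3_pdf_simps less_imp_le[OF gauss_pdf_pos])
  then have "component_loglik G (0, G, G) \<ge> ln 2 - ln 3 - gauss_log_const - 1 / 2"
    by (simp add: ln_div)
  with outer[of "-R"] outer[of R] show ?thesis
    unfolding pop_loglik_eq_component_loglik by simp argo
qed

lemma pop_loglik_ge_at_00G:
  "pop_loglik (-R, R, G) (0, 0, G) \<ge> - ln 3 - gauss_log_const - 1 / 2 - R\<^sup>2 / 3 + 2 * ln 2 / 3"
proof -
  have "component_loglik mu (0, 0, G) \<ge> ln (2 / 3) - gauss_log_const - (1 + (mu - 0)\<^sup>2) / 2" for mu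
    by (rule component_loglik_ge) (auto simp: gmm3_pdf_simps less_imp_le[OF gauss_pdf_pos])
  then have outer: "component_loglik mu (0, 0, G) \<ge> ln 2 - ln 3 - gauss_log_const - (1 + mu\<^sup>2) / 2" for mu
    by (simp add: ln_div)
  have "component_loglik G (0, 0, G) \<ge> ln (1 / 3) - gauss_log_const - (1 + (G - G)\<^sup>2) / 2"
    by (rule component_loglik_ge) (auto simp: gmm3_pdf_simps less_imp_le[OF gauss_pdf_pos])
  then have "component_loglik G (0, 0, G) \<ge> - ln 3 - gauss_log_const - 1 / 2"
    by (simp add: ln_div)
  with outer[of "-R"] outer[of R] show ?thesis
    unfolding pop_loglik_eq_component_loglik by simp argo
qed

subsection \<open>The population log-likelihood near the region\<close>

context
  fixes R G :: real
  assumes R: "R > 0" and G: "G \<ge> 512 * (1 + R\<^sup>2)"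
begin

text \<open>The exponent of the Jensen bound; small enough that replacing \<open>R\<^sup>2/(1 + t)\<close> by \<open>R\<^sup>2\<close>
  costs at most \<open>1/8\<close>.\<close>
definition tilt :: real where "tilt = 1 / (8 * (1 + R\<^sup>2))"

lemma tilt_bounds:
  shows tilt_pos: "0 < tilt" and tilt_le: "tilt \<le> 1 / 8" and tilt_R: "tilt * (1 + R\<^sup>2) = 1 / 8"
    and ln_tilt_ge: "1 / 2 - tilt / 2 \<le> ln (1 + tilt) / (2 * tilt)"
    and ln3_tilt_le: "ln 3 / tilt \<le> 16 * (1 + R\<^sup>2)"
proof -
  have V0: "1 + R\<^sup>2 \<noteq> 0"
    by (metis add_pos_nonneg zero_le_power2 zero_less_one less_irrefl)
  show t: "0 < tilt" "tilt \<le> 1 / 8"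
    unfolding tilt_def by (simp_all add: add_pos_nonneg divide_le_eq)
  show "tilt * (1 + R\<^sup>2) = 1 / 8"
    unfolding tilt_def using V0 by simp
  have "tilt - tilt\<^sup>2 \<le> ln (1 + tilt)"
    using t by (intro ln_one_plus_pos_lower_bound) auto
  then have "(tilt - tilt\<^sup>2) / (2 * tilt) \<le> ln (1 + tilt) / (2 * tilt)"
    using t by (intro divide_right_mono) auto
  moreover have "(tilt - tilt\<^sup>2) / (2 * tilt) = 1 / 2 - tilt / 2"
    using t by (simp add: field_simps power2_eq_square)
  ultimately show "1 / 2 - tilt / 2 \<le> ln (1 + tilt) / (2 * tilt)"
    by simp
  have "ln (3 :: real) \<le> 2"
    using ln_le_minus_one[of "3::real"] by simp
  have "ln 3 / tilt = ln 3 * (8 * (1 + R\<^sup>2))"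
    unfolding tilt_def by simp
  also have "\<dots> \<le> 2 * (8 * (1 + R\<^sup>2))"
    using \<open>ln 3 \<le> 2\<close> by (intro mult_right_mono) (simp_all add: add_nonneg_nonneg)
  finally show "ln 3 / tilt \<le> 16 * (1 + R\<^sup>2)"
    by simp
qed

lemma separation_bounds:
  shows G_pos: "G > 0" and G_ge_R: "12 * R \<le> G" and G_sq_ge: "262144 * (1 + R\<^sup>2) \<le> G\<^sup>2"
    and tilt_G_ge: "4096 \<le> tilt\<^sup>2 * G\<^sup>2"
proof -
  show "G > 0" "12 * R \<le> G"
    using G R zero_le_power2[of "R - 1"] unfolding power2_eq_square by (auto simp: algebra_simps)
  have "512 \<le> G"
    using G zero_le_power2[of R] by argo
  then have "512 * (512 * (1 + R\<^sup>2)) \<le> G * G"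
    using G by (intro mult_mono) auto
  then show "262144 * (1 + R\<^sup>2) \<le> G\<^sup>2"
    by (simp add: power2_eq_square)
  have "64 = 512 * (tilt * (1 + R\<^sup>2))"
    unfolding tilt_R by simp
  also have "\<dots> = tilt * (512 * (1 + R\<^sup>2))"
    by (rule mult.left_commute)
  also have "\<dots> \<le> tilt * G"
    using G tilt_pos by (intro mult_left_mono) auto
  finally have "64 \<le> tilt * G" .
  then have "64 * 64 \<le> (tilt * G) * (tilt * G)"
    by (intro mult_mono) auto
  then show "4096 \<le> tilt\<^sup>2 * G\<^sup>2"
    by (simp add: power2_eq_square algebra_simps)
qed

lemma component_loglik_sum_le_near:
  assumes m1: "- G / 3 \<le> m1" "m1 \<le> G / 3" and m2: "m2 \<ge> 2 * G / 3" and m3: "m3 \<ge> 2 * G / 3"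
  shows "component_loglik (-R) (m1, m2, m3) + component_loglik R (m1, m2, m3)
    \<le> 2 * (- ln 3 - gauss_log_const - ln (1 + tilt) / (2 * tilt)) - (R\<^sup>2 + m1\<^sup>2) / (1 + tilt) + 96 / 4096"
proof -
  have t: "0 < tilt" "tilt \<le> 1"
    using tilt_pos tilt_le by auto
  have "48 / (tilt\<^sup>2 * G\<^sup>2) \<le> 48 / 4096"
    using tilt_G_ge by (intro divide_left_mono) auto
  moreover have "(-R - m1)\<^sup>2 / (2 * (1 + tilt)) + (R - m1)\<^sup>2 / (2 * (1 + tilt))
      = 2 * (R\<^sup>2 + m1\<^sup>2) / (2 * (1 + tilt))"
    by (simp add: add_divide_distrib[symmetric] power2_eq_square algebra_simps)
  moreover have "2 * (R\<^sup>2 + m1\<^sup>2) / (2 * (1 + tilt)) = (R\<^sup>2 + m1\<^sup>2) / (1 + tilt)"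
    by (rule mult_divide_mult_cancel_left) simp
  ultimately show ?thesis
    using component_loglik_le_near[OF t R G_ge_R _ m1 m2 m3, of "-R"]
      component_loglik_le_near[OF t R G_ge_R _ m1 m2 m3, of R] R
    by argo
qed

lemma pop_loglik_le_far:
  assumes m1: "m1 \<le> - G / 3" and m2: "m2 \<ge> 2 * G / 3" and m3: "m3 \<ge> 2 * G / 3"
  shows "pop_loglik (-R, R, G) (m1, m2, m3) \<le> - ln 3 - gauss_log_const - 1 / 2 - R\<^sup>2 / 3 - 1 / 20"
proof -
  have t: "0 < tilt" "tilt \<le> 1"
    using tilt_pos tilt_le by auto
  have "G\<^sup>2 / 36 \<le> G\<^sup>2 / (32 * (1 + tilt))"
    using t tilt_le by (intro divide_left_mono) auto
  then show ?thesis
    unfolding pop_loglik_eq_component_loglik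
    using component_loglik_le_far[OF t R G_ge_R _ m1 m2 m3, of "-R"]
      component_loglik_le_far[OF t R G_ge_R _ m1 m2 m3, of R] component_loglik_le[OF t, of G m1 m2 m3]
      ln_tilt_ge ln3_tilt_le G_sq_ge tilt_le zero_le_power2[of R] R
    by argo
qed

lemma pop_loglik_le_boundary:
  assumes m1: "m1 \<le> G / 3" and m2: "m2 \<ge> 2 * G / 3" and m3: "m3 \<ge> 2 * G / 3"
    and boundary: "m1 = G / 3 \<or> m1 \<le> - G / 3 \<or> m2 = 2 * G / 3 \<or> m2 \<ge> 2 * G \<or> m3 = 2 * G / 3 \<or> m3 \<ge> 2 * G"
  shows "pop_loglik (-R, R, G) (m1, m2, m3) \<le> - ln 3 - gauss_log_const - 1 / 2 - R\<^sup>2 / 3 + ln 2 / 3 - 1 / 20"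
proof -
  have t: "0 < tilt" "tilt \<le> 1"
    using tilt_pos tilt_le by auto
  consider "m1 \<le> - G / 3" | "- G / 3 \<le> m1" "m1 = G / 3"
    | "- G / 3 \<le> m1" "m2 = 2 * G / 3 \<or> m2 \<ge> 2 * G \<or> m3 = 2 * G / 3 \<or> m3 \<ge> 2 * G"
    using boundary by linarith
  then show ?thesis
  proof cases
    case 1
    then show ?thesis
      using pop_loglik_le_far[OF _ m2 m3] ln_two_ge_half by fastforce
  next
    case 2
    text \<open>The first centre sits at \<open>G/3\<close>, far from both \<open>\<plusminus>R\<close>.\<close>
    have "(R\<^sup>2 + m1\<^sup>2) / (1 + tilt) \<ge> m1\<^sup>2 / (9 / 8)"
      using t tilt_le by (intro frac_le) auto
    moreover have "m1\<^sup>2 / (9 / 8) = 8 * G\<^sup>2 / 81"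
      unfolding 2(2) by (simp add: power_divide)
    ultimately show ?thesis
      unfolding pop_loglik_eq_component_loglik
      using component_loglik_sum_le_near[OF 2(1) m1 m2 m3] component_loglik_le[OF t, of G m1 m2 m3]
        ln_tilt_ge ln3_tilt_le G_sq_ge tilt_le ln_two_ge_half zero_le_power2[of R]
      by argo
  next
    case 3
    have "72 / (tilt\<^sup>2 * G\<^sup>2) \<le> 72 / 4096"
      using tilt_G_ge by (intro divide_left_mono) auto
    moreover have "R\<^sup>2 / (1 + tilt) \<le> (R\<^sup>2 + m1\<^sup>2) / (1 + tilt)"
      using t by (intro divide_right_mono) auto
    ultimately show ?thesis
      unfolding pop_loglik_eq_component_loglik
      using component_loglik_sum_le_near[OF 3(1) m1 m2 m3]
        component_loglik_le_two_far[OF t G_pos m1 m2 m3 3(2)] diff_le_divide_one_plus[OF _ t(1), of "R\<^sup>2"]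
        ln_tilt_ge tilt_R tilt_le ln_two_ge_half zero_le_power2[of R]
      by argo
  qed
qed

lemma pop_loglik_le_region:
  assumes m1: "m1 \<le> G / 3" and m2: "m2 \<ge> 2 * G / 3" and m3: "m3 \<ge> 2 * G / 3"
  shows "pop_loglik (-R, R, G) (m1, m2, m3) \<le> - ln 3 - gauss_log_const - 1 / 2 - R\<^sup>2 / 3 + 2 * ln 2 / 3 - 1 / 100"
proof (cases "m1 \<le> - G / 3")
  case True
  then show ?thesis
    using pop_loglik_le_far[OF _ m2 m3] ln_two_ge_half by fastforce
next
  case False
  have t: "0 < tilt" "tilt \<le> 1"
    using tilt_pos tilt_le by auto
  have "262144 \<le> G\<^sup>2"
    using G_sq_ge zero_le_power2[of R] by argo
  then have "9 / (2 * G\<^sup>2) \<le> 9 / (2 * 262144)"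
    by (intro divide_left_mono) auto
  moreover have "R\<^sup>2 / (1 + tilt) \<le> (R\<^sup>2 + m1\<^sup>2) / (1 + tilt)"
    using t by (intro divide_right_mono) auto
  moreover have "tilt + R\<^sup>2 * tilt = 1 / 8"
    using tilt_R by (simp add: algebra_simps)
  moreover have "- G / 3 \<le> m1"
    using False by simp
  ultimately show ?thesis
    unfolding pop_loglik_eq_component_loglik
    using component_loglik_sum_le_near[OF _ m1 m2 m3] component_loglik_le_one_far[OF G_pos m1, of m2 m3]
      diff_le_divide_one_plus[OF zero_le_power2 t(1), of R] ln_tilt_ge tilt_le ln_two_ge_half
    by argo
qed

lemma pop_loglik_local_max:
  obtains m where "m \<in> {(m1, m2, m3). m1 \<le> G / 3 \<and> 2 * G / 3 \<le> m2 \<and> 2 * G / 3 \<le> m3}"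
    "\<exists>e>0. \<forall>m'. dist m' m < e \<longrightarrow> pop_loglik (-R, R, G) m' \<le> pop_loglik (-R, R, G) m"
proof -
  define K where "K = {-2 * G..G / 3} \<times> {2 * G / 3..2 * G} \<times> {2 * G / 3..2 * G}"
  have cont: "continuous_on K (pop_loglik (-R, R, G))"
    by (rule continuous_on_subset[OF continuous_on_pop_loglik[of "2 * G"]]) (use G_pos in \<open>auto simp: K_def\<close>)
  have centre: "(0, G, G) \<in> K"
    unfolding K_def using G_pos by simp
  have frontier: "pop_loglik (-R, R, G) y < pop_loglik (-R, R, G) (0, G, G)" if "y \<in> K - interior K" for y
  proof -
    obtain m1 m2 m3 where y: "y = (m1, m2, m3)"
      by (cases y)
    have "m1 \<le> G / 3" "2 * G / 3 \<le> m2" "2 * G / 3 \<le> m3"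
      "m1 = G / 3 \<or> m1 \<le> - G / 3 \<or> m2 = 2 * G / 3 \<or> m2 \<ge> 2 * G \<or> m3 = 2 * G / 3 \<or> m3 \<ge> 2 * G"
      using that G_pos unfolding y K_def interior_Times by auto
    from pop_loglik_le_boundary[OF this] show ?thesis
      unfolding y using pop_loglik_ge_at_0GG[of R G] by linarith
  qed
  have "compact K"
    unfolding K_def by (intro compact_Times compact_Icc)
  then obtain m where "m \<in> interior K"
    "\<exists>e>0. \<forall>m'. dist m' m < e \<longrightarrow> pop_loglik (-R, R, G) m' \<le> pop_loglik (-R, R, G) m"
    using compact_interior_local_max[OF _ cont centre frontier] by blast
  moreover have "interior K \<subseteq> {(m1, m2, m3). m1 \<le> G / 3 \<and> 2 * G / 3 \<le> m2 \<and> 2 * G / 3 \<le> m3}"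
    unfolding K_def interior_Times by auto
  ultimately show thesis
    using that by blast
qed

lemma Sup_pop_loglik_faces_less:
  "Sup (pop_loglik (-R, R, G) ` {(m1, m2, m3). m1 \<le> G / 3 \<and> 2 * G / 3 \<le> m2 \<and> 2 * G / 3 \<le> m3
      \<and> (m1 = G / 3 \<or> m2 = 2 * G / 3 \<or> m3 = 2 * G / 3)}) < pop_loglik (-R, R, G) (0, G, G)"
    (is "Sup (_ ` ?faces) < _")
proof -
  have "Sup (pop_loglik (-R, R, G) ` ?faces) \<le> - ln 3 - gauss_log_const - 1 / 2 - R\<^sup>2 / 3 + ln 2 / 3 - 1 / 20"
  proof (rule cSup_least)
    have "(G / 3, 2 * G / 3, 2 * G / 3) \<in> ?faces"
      by simp
    then show "pop_loglik (-R, R, G) ` ?faces \<noteq> {}"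
      by blast
  next
    fix y
    assume "y \<in> pop_loglik (-R, R, G) ` ?faces"
    then obtain m1 m2 m3 where "y = pop_loglik (-R, R, G) (m1, m2, m3)" "m1 \<le> G / 3" "2 * G / 3 \<le> m2"
      "2 * G / 3 \<le> m3" "m1 = G / 3 \<or> m2 = 2 * G / 3 \<or> m3 = 2 * G / 3"
      by auto
    then show "y \<le> - ln 3 - gauss_log_const - 1 / 2 - R\<^sup>2 / 3 + ln 2 / 3 - 1 / 20"
      using pop_loglik_le_boundary[of m1 m2 m3] by blast
  qed
  then show ?thesis
    using pop_loglik_ge_at_0GG[of R G] by linarith
qed

lemma pop_loglik_less_at_00G:
  assumes "m1 \<le> G / 3" "2 * G / 3 \<le> m2" "2 * G / 3 \<le> m3"
  shows "pop_loglik (-R, R, G) (m1, m2, m3) < pop_loglik (-R, R, G) (0, 0, G)"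
  using pop_loglik_le_region[OF assms] pop_loglik_ge_at_00G[of R G] by linarith

end

theorem mainTheorem2:
  fixes R :: real
  assumes "R > 0"
  shows "\<exists>A::real. \<forall>\<gamma>::real. \<gamma> > A \<longrightarrow> \<gamma> > 0 \<longrightarrow>
     (let L = pop_loglik (-R, R, \<gamma> * R) in
        L (0, \<gamma> * R, \<gamma> * R) > Sup (L ` faces_regionD R \<gamma>)
      \<and> (\<exists>m \<in> regionD R \<gamma>. (\<exists>e > 0. \<forall>m'. dist m' m < e \<longrightarrow> L m' \<le> L m)
                            \<and> (\<exists>m'. L m' > L m)))"
proof (intro exI[of _ "512 * (1 + R\<^sup>2) / R"] allI impI)
  fix \<gamma> :: real
  assume "\<gamma> > 512 * (1 + R\<^sup>2) / R"
  define G where "G = \<gamma> * R"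
  have G: "G \<ge> 512 * (1 + R\<^sup>2)"
    using \<open>\<gamma> > _\<close> \<open>R > 0\<close> unfolding G_def by (simp add: pos_divide_less_eq less_imp_le)
  have region: "regionD R \<gamma> = {(m1, m2, m3). m1 \<le> G / 3 \<and> 2 * G / 3 \<le> m2 \<and> 2 * G / 3 \<le> m3}"
    unfolding regionD_def G_def by (simp add: mult.assoc)
  have faces: "faces_regionD R \<gamma> = {(m1, m2, m3). m1 \<le> G / 3 \<and> 2 * G / 3 \<le> m2 \<and> 2 * G / 3 \<le> m3
      \<and> (m1 = G / 3 \<or> m2 = 2 * G / 3 \<or> m3 = 2 * G / 3)}"
    unfolding faces_regionD_def region unfolding G_def by (simp add: mult.assoc)
  obtain m where m: "m \<in> regionD R \<gamma>"
      "\<exists>e>0. \<forall>m'. dist m' m < e \<longrightarrow> pop_loglik (-R, R, G) m' \<le> pop_loglik (-R, R, G) m"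
    using pop_loglik_local_max[OF \<open>R > 0\<close> G] unfolding region by blast
  moreover have "pop_loglik (-R, R, G) m < pop_loglik (-R, R, G) (0, 0, G)"
    using m(1) pop_loglik_less_at_00G[OF \<open>R > 0\<close> G] unfolding region by auto
  ultimately show "let L = pop_loglik (-R, R, \<gamma> * R) in L (0, \<gamma> * R, \<gamma> * R) > Sup (L ` faces_regionD R \<gamma>)
      \<and> (\<exists>m \<in> regionD R \<gamma>. (\<exists>e > 0. \<forall>m'. dist m' m < e \<longrightarrow> L m' \<le> L m) \<and> (\<exists>m'. L m' > L m))"
    using Sup_pop_loglik_faces_less[OF \<open>R > 0\<close> G] unfolding Let_def faces G_def[symmetric]
    by (intro conjI bexI[of _ m] exI[of _ "(0, 0, G)"]) auto
qed

end
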